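(* For integers $k,l\geq1$ with $k+l\leq n$, the set $T_{k,l,n}$ is a Jacobi subset of $S_n$; that is, $\sum_{\sigma\in T_{k,l,n}}[a_{\sigma(1)},\dots,a_{\sigma(n)}]=0$ for all elements $a_1,\dots,a_n$ of every Lie ring.
   Context: A Lie ring is a Lie algebra over $\mathbb Z$; the left-normed bracket is $[a_1]=a_1$, $[a_1,\dots,a_n]=[[a_1,\dots,a_{n-1}],a_n]$. $S_m$ is the symmetric group on $\{1,\dots,m\}$ with product given by composition. A subset $T\subseteq S_n$ is Jacobi if $\sum_{\sigma\in T}[a_{\sigma(1)},\dots,a_{\sigma(n)}]=0$ for all elements $a_1,\dots,a_n$ of every Lie ring. For $m\leq n$, $\iota_{m,n}:S_m\hookrightarrow S_n$ is the canonical embedding. An $(s,t)$-shuffle is a pair $(\alpha,\beta)$ of strictly increasing maps $\alpha:\{1,\dots,s\}\to\{1,\dots,s+t\}$, $\beta:\{1,\dots,t\}\to\{1,\dots,s+t\}$ with disjoint images; ${\sf Sh}^1(s,t)$ is the set of those with $\alpha(1)=1$. For $p,q\geq1$, $0\leq i\leq q-1$ and $(\alpha,\beta)\in{\sf Sh}^1(q-i,i)$, let $\tilde\sigma_{\alpha,\beta,p,q}\in S_{p+q}$ be given by $\tilde\sigma(j)=j$ for $1\leq j\leq p$, $\tilde\sigma(p+j)=p+\beta(i+1-j)$ for $1\leq j\leq i$, $\tilde\sigma(p+i+j)=p+\alpha(j)$ for $1\leq j\leq q-i$; let $\sigma_{\alpha,\beta,p,q}=\tilde\sigma_{\alpha,\beta,p,q}\circ(1,2)^i$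 where $(1,2)$ is the transposition. Set $C_{p,q}=\{\sigma_{\alpha,\beta,p,q}\mid 0\leq i\leq q-1,\ (\alpha,\beta)\in{\sf Sh}^1(q-i,i)\}\subseteq S_{p+q}$. $\Phi_{k,l}\in S_{k+l}$ is defined by $\Phi_{k,l}(i)=i+k$ if $i\leq l$ and $\Phi_{k,l}(i)=i-l$ if $i>l$. Define $T_{k,l}=C_{k,l}\cup\{\Phi_{k,l}\circ\tau\mid\tau\in C_{l,k}\}\subseteq S_{k+l}$ and $T_{k,l,n}=\iota_{k+l,n}(T_{k,l})\subseteq S_n$. *)

theory Defs
  imports "HOL-Combinatorics.Combinatorics"
begin

definition lie_ring :: "('a::ab_group_add \<Rightarrow> 'a \<Rightarrow> 'a) \<Rightarrow> bool" where
  "lie_ring br \<longleftrightarrow>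
     (\<forall>x y z. br (x + y) z = br x z + br y z) \<and>
     (\<forall>x y z. br x (y + z) = br x y + br x z) \<and>
     (\<forall>x. br x x = 0) \<and>
     (\<forall>x y z. br (br x y) z + br (br y z) x + br (br z x) y = 0)"

fun left_normed :: "('a \<Rightarrow> 'a \<Rightarrow> 'a) \<Rightarrow> 'a list \<Rightarrow> 'a" where
  "left_normed br [] = undefined"
| "left_normed br (x # xs) = foldl br x xs"

definition perm_bracket :: "('a \<Rightarrow> 'a \<Rightarrow> 'a) \<Rightarrow> nat \<Rightarrow> (nat \<Rightarrow> 'a) \<Rightarrow> (nat \<Rightarrow> nat) \<Rightarrow> 'a" where
  "perm_bracket br n a \<sigma> = left_normed br (map (\<lambda>j. a (\<sigma> j)) [1..<n+1])"

definition jacobi_in :: "('a::ab_group_add \<Rightarrow> 'a \<Rightarrow> 'a) \<Rightarrow> nat \<Rightarrow> (nat \<Rightarrow> nat) set \<Rightarrow> bool" where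
  "jacobi_in br n T \<longleftrightarrow> (\<forall>a. (\<Sum>\<sigma>\<in>T. perm_bracket br n a \<sigma>) = 0)"

definition shuffle1 :: "nat \<Rightarrow> nat \<Rightarrow> ((nat \<Rightarrow> nat) \<times> (nat \<Rightarrow> nat)) set" where
  "shuffle1 s t = {(\<alpha>, \<beta>).
      strict_mono_on {1..s} \<alpha> \<and> strict_mono_on {1..t} \<beta> \<and>
      \<alpha> ` {1..s} \<subseteq> {1..s+t} \<and> \<beta> ` {1..t} \<subseteq> {1..s+t} \<and>
      \<alpha> ` {1..s} \<inter> \<beta> ` {1..t} = {} \<and> \<alpha> 1 = 1}"

definition sigma_tilde :: "(nat \<Rightarrow> nat) \<Rightarrow> (nat \<Rightarrow> nat) \<Rightarrow> nat \<Rightarrow> nat \<Rightarrow> nat \<Rightarrow> nat \<Rightarrow> nat" where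
  "sigma_tilde \<alpha> \<beta> p q i j =
     (if 1 \<le> j \<and> j \<le> p then j
      else if p + 1 \<le> j \<and> j \<le> p + i then p + \<beta> (i + 1 - (j - p))
      else if p + i + 1 \<le> j \<and> j \<le> p + q then p + \<alpha> (j - p - i)
      else j)"

definition sigma_perm :: "(nat \<Rightarrow> nat) \<Rightarrow> (nat \<Rightarrow> nat) \<Rightarrow> nat \<Rightarrow> nat \<Rightarrow> nat \<Rightarrow> nat \<Rightarrow> nat" where
  "sigma_perm \<alpha> \<beta> p q i = sigma_tilde \<alpha> \<beta> p q i \<circ> ((transpose (1::nat) 2) ^^ i)"

definition C_set :: "nat \<Rightarrow> nat \<Rightarrow> (nat \<Rightarrow> nat) set" where
  "C_set p q = {sigma_perm \<alpha> \<beta> p q i | i \<alpha> \<beta>. i \<le> q - 1 \<and> (\<alpha>, \<beta>) \<in> shuffle1 (q - i) i}"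

definition Phi :: "nat \<Rightarrow> nat \<Rightarrow> nat \<Rightarrow> nat" where
  "Phi k l i = (if 1 \<le> i \<and> i \<le> l then i + k else if l < i \<and> i \<le> k + l then i - l else i)"

definition T_set :: "nat \<Rightarrow> nat \<Rightarrow> (nat \<Rightarrow> nat) set" where
  "T_set k l = C_set k l \<union> {Phi k l \<circ> \<tau> | \<tau>. \<tau> \<in> C_set l k}"

definition iota :: "nat \<Rightarrow> nat \<Rightarrow> (nat \<Rightarrow> nat) \<Rightarrow> nat \<Rightarrow> nat" where
  "iota m n \<sigma> j = (if 1 \<le> j \<and> j \<le> m then \<sigma> j else j)"

definition T_set_n :: "nat \<Rightarrow> nat \<Rightarrow> nat \<Rightarrow> (nat \<Rightarrow> nat) set" where
  "T_set_n k l n = iota (k + l) n ` T_set k l"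

end

theory Submission
  imports Defs
begin

text \<open>The elements of \<open>C\<^sub>p\<^sub>,\<^sub>q\<close> are indexed by the subsets \<open>B = \<beta>({1..i})\<close> of \<open>{2..q}\<close>, and the
  term of such an element is \<open>(-1)\<^bsup>|B|\<^esup>\<close> times the bracket of \<open>a\<^sub>1, \<dots>, a\<^sub>p\<close>, then the letters
  \<open>a\<^sub>p\<^sub>+\<^sub>j\<close> with \<open>j \<in> B\<close> in decreasing order, then the remaining \<open>a\<^sub>p\<^sub>+\<^sub>j\<close> in increasing order,
  then \<open>a\<^sub>p\<^sub>+\<^sub>q\<^sub>+\<^sub>1, \<dots>, a\<^sub>n\<close>. Expanding \<open>[x, [b\<^sub>1, \<dots>, b\<^sub>q]]\<close> repeatedly by the Jacobi identity
  produces exactly these signed terms, so the sum over \<open>C\<^sub>p\<^sub>,\<^sub>q\<close> is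
  \<open>[[a\<^sub>1, \<dots>, a\<^sub>p], [a\<^sub>p\<^sub>+\<^sub>1, \<dots>, a\<^sub>p\<^sub>+\<^sub>q], a\<^sub>p\<^sub>+\<^sub>q\<^sub>+\<^sub>1, \<dots>, a\<^sub>n]\<close>. Composing with \<open>\<Phi>\<^sub>k\<^sub>,\<^sub>l\<close> relabels the
  letters, so the other half \<open>\<Phi>\<^sub>k\<^sub>,\<^sub>l \<circ> C\<^sub>l\<^sub>,\<^sub>k\<close> of \<open>T\<^sub>k\<^sub>,\<^sub>l\<close> contributes the same bracket with
  the two inner blocks exchanged; the halves are disjoint and cancel by antisymmetry.\<close>

lemma left_normed_append:
  "xs \<noteq> [] \<Longrightarrow> left_normed br (xs @ ys) = foldl br (left_normed br xs) ys"
  by (cases xs) simp_all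

lemma left_normed_snoc:
  "xs \<noteq> [] \<Longrightarrow> left_normed br (xs @ [y]) = br (left_normed br xs) y"
  by (simp add: left_normed_append)

lemma map_upt_shift:
  assumes "\<And>i. m \<le> i \<Longrightarrow> i < r \<Longrightarrow> f (i + d) = g i"
  shows "map f [m + d..<r + d] = map g [m..<r]"
proof (rule nth_equalityI)
  fix i
  assume "i < length (map f [m + d..<r + d])"
  then show "map f [m + d..<r + d] ! i = map g [m..<r] ! i"
    using assms[of "m + i"] by (simp add: ac_simps)
qed simp

lemma upt_append: "i \<le> j \<Longrightarrow> j \<le> k \<Longrightarrow> [i..<j] @ [j..<k] = [i..<k]"
  using upt_add_eq_append[of i j "k - j"] by simp

section \<open>Shuffle words\<close>

definition card_sign :: "nat set \<Rightarrow> 'a::ab_group_add \<Rightarrow> 'a" where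
  "card_sign B x = (if even (card B) then x else - x)"

text \<open>For \<open>B = \<beta>({1..i})\<close>, this is the word \<open>\<beta>(i), \<dots>, \<beta>(1), \<alpha>(1), \<dots>, \<alpha>(q - i)\<close>
  of the paper.\<close>
definition shuffle_word :: "nat set \<Rightarrow> nat \<Rightarrow> nat list" where
  "shuffle_word B q = rev (sorted_list_of_set B) @ sorted_list_of_set ({1..q} - B)"

lemma sorted_list_of_set_insert_greatest:
  assumes "finite A" "\<forall>x\<in>A. x < m"
  shows "sorted_list_of_set (insert m A) = sorted_list_of_set A @ [m]"
proof -
  have "sorted_wrt (<) (sorted_list_of_set A @ [m])"
    using assms by (simp add: sorted_wrt_append)
  then show ?thesis
    using assms by (subst sorted_list_of_set_unique[symmetric]) (auto simp: card_insert_if)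
qed

lemma shuffle_word_Suc:
  assumes "B \<subseteq> {2..q}"
  shows "shuffle_word B (Suc q) = shuffle_word B q @ [Suc q]"
proof -
  have "{1..Suc q} - B = insert (Suc q) ({1..q} - B)"
    using assms by auto
  then show ?thesis
    unfolding shuffle_word_def using sorted_list_of_set_insert_greatest[of "{1..q} - B" "Suc q"] by auto
qed

lemma shuffle_word_insert_Suc:
  assumes "B \<subseteq> {2..q}"
  shows "shuffle_word (insert (Suc q) B) (Suc q) = Suc q # shuffle_word B q"
proof -
  have "finite B"
    using assms finite_subset by blast
  then have "sorted_list_of_set (insert (Suc q) B) = sorted_list_of_set B @ [Suc q]"
    using assms by (intro sorted_list_of_set_insert_greatest) auto
  moreover have "{1..Suc q} - insert (Suc q) B = {1..q} - B"
    using assms by auto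
  ultimately show ?thesis
    unfolding shuffle_word_def by simp
qed

lemma Pow_atLeastAtMost_Suc:
  "1 \<le> q \<Longrightarrow> Pow {2..Suc q} = Pow {2..q} \<union> insert (Suc q) ` Pow {2..q}"
  by (simp add: atLeastAtMostSuc_conv Pow_insert)

lemma shuffle_word_length: "B \<subseteq> {2..q} \<Longrightarrow> length (shuffle_word B q) = q"
proof -
  assume B: "B \<subseteq> {2..q}"
  then have "card B \<le> q - 1"
    using card_mono[of "{2..q}" B] by auto
  moreover have "card ({1..q} - B) = q - card B"
    using B by (subst card_Diff_subset) (auto intro: rev_finite_subset)
  ultimately show ?thesis
    using B rev_finite_subset[OF finite_atLeastAtMost B] by (simp add: shuffle_word_def)
qed

lemma set_shuffle_word: "B \<subseteq> {2..q} \<Longrightarrow> set (shuffle_word B q) = {1..q}"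
  using rev_finite_subset[OF finite_atLeastAtMost, of B 2 q] by (auto simp: shuffle_word_def)

lemma shuffle_word_nth_range: "B \<subseteq> {2..q} \<Longrightarrow> m < q \<Longrightarrow> shuffle_word B q ! m \<in> {1..q}"
  using nth_mem[of m "shuffle_word B q"] shuffle_word_length[of B q] set_shuffle_word[of B q] by simp

lemma shuffle_word_nth_prefix:
  "finite B \<Longrightarrow> m < card B \<Longrightarrow> shuffle_word B q ! m = sorted_list_of_set B ! (card B - Suc m)"
  by (simp add: shuffle_word_def nth_append rev_nth)

lemma shuffle_word_nth_suffix:
  "finite B \<Longrightarrow> card B \<le> m \<Longrightarrow> shuffle_word B q ! m = sorted_list_of_set ({1..q} - B) ! (m - card B)"
  by (simp add: shuffle_word_def nth_append)

lemma sorted_list_of_set_diff_eq_Cons_1: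
  assumes "B \<subseteq> {2..(q::nat)}" "1 \<le> q"
  shows "sorted_list_of_set ({1..q} - B) = 1 # sorted_list_of_set ({2..q} - B)"
proof -
  have "{1..q} - B = insert 1 ({2..q} - B)" "1 \<notin> {2..q} - B"
    using assms by auto
  then show ?thesis
    by (simp add: sorted_list_of_set_insert_remove insort_is_Cons)
qed

lemma takeWhile_shuffle_word:
  assumes "B \<subseteq> {2..q}" "1 \<le> q"
  shows "takeWhile (\<lambda>x. x \<noteq> 1) (shuffle_word B q) = rev (sorted_list_of_set B)"
proof -
  have "shuffle_word B q = rev (sorted_list_of_set B) @ 1 # sorted_list_of_set ({2..q} - B)"
    unfolding shuffle_word_def sorted_list_of_set_diff_eq_Cons_1[OF assms] ..
  moreover have "1 \<notin> set (rev (sorted_list_of_set B))"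
    using assms rev_finite_subset[OF finite_atLeastAtMost assms(1)] by auto
  moreover have "takeWhile (\<lambda>x. x \<noteq> 1) (xs @ 1 # ys) = xs" if "1 \<notin> set xs" for xs ys :: "nat list"
    using that by (induction xs) auto
  ultimately show ?thesis
    by simp
qed

lemma shuffle_word_inj:
  assumes "B \<subseteq> {2..q}" "B' \<subseteq> {2..q}" "1 \<le> q" "shuffle_word B q = shuffle_word B' q"
  shows "B = B'"
  using takeWhile_shuffle_word[of B q] takeWhile_shuffle_word[of B' q] assms
    rev_finite_subset[OF finite_atLeastAtMost, of B 2 q] rev_finite_subset[OF finite_atLeastAtMost, of B' 2 q]
  by (metis set_rev set_sorted_list_of_set)

lemma shuffle_word_nth_0_mem:
  assumes "B \<subseteq> {2..q}" "B \<noteq> {}"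
  shows "shuffle_word B q ! 0 \<in> B"
proof -
  have "finite B"
    using rev_finite_subset[OF finite_atLeastAtMost assms(1)] .
  then have "0 < length (rev (sorted_list_of_set B))"
    using assms(2) by (simp add: card_gt_0_iff)
  then have "rev (sorted_list_of_set B) ! 0 \<in> set (rev (sorted_list_of_set B))"
    by (rule nth_mem)
  then show ?thesis
    using \<open>finite B\<close> assms(2) by (simp add: shuffle_word_def nth_append)
qed

section \<open>The sets \<open>C\<^sub>p\<^sub>,\<^sub>q\<close>\<close>

definition shuffle_perm :: "nat \<Rightarrow> nat \<Rightarrow> nat set \<Rightarrow> nat \<Rightarrow> nat" where
  "shuffle_perm p q B j =
     (if 1 \<le> j \<and> j \<le> p then j
      else if p + 1 \<le> j \<and> j \<le> p + q then p + shuffle_word B q ! (j - p - 1)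
      else j)"

text \<open>\<open>C_perm p q B\<close> is the permutation \<open>\<sigma>\<^sub>\<alpha>\<^sub>,\<^sub>\<beta>\<^sub>,\<^sub>p\<^sub>,\<^sub>q\<close> with \<open>\<beta>({1..i}) = B\<close>.\<close>
definition C_perm :: "nat \<Rightarrow> nat \<Rightarrow> nat set \<Rightarrow> nat \<Rightarrow> nat" where
  "C_perm p q B = shuffle_perm p q B \<circ> (transpose (1::nat) 2 ^^ card B)"

lemma transpose_funpow: "transpose (1::nat) 2 ^^ i = (if even i then id else transpose 1 2)"
  by (induction i) auto

lemma C_perm_apply:
  "C_perm p q B x = shuffle_perm p q B (if even (card B) then x else transpose 1 2 x)"
  unfolding C_perm_def transpose_funpow by simp

lemma shuffle_perm_block:
  "p + 1 \<le> j \<Longrightarrow> j \<le> p + q \<Longrightarrow> shuffle_perm p q B j = p + shuffle_word B q ! (j - p - 1)"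
  by (simp add: shuffle_perm_def)

lemma sigma_tilde_eq_shuffle_perm:
  assumes B: "B \<subseteq> {2..q}"
    and \<beta>: "\<And>j. j \<in> {1..card B} \<Longrightarrow> \<beta> j = sorted_list_of_set B ! (j - 1)"
    and \<alpha>: "\<And>j. j \<in> {1..q - card B} \<Longrightarrow> \<alpha> j = sorted_list_of_set ({1..q} - B) ! (j - 1)"
  shows "sigma_tilde \<alpha> \<beta> p q (card B) = shuffle_perm p q B"
proof
  fix j
  have fin: "finite B"
    using rev_finite_subset[OF finite_atLeastAtMost B] .
  have "card B \<le> q"
    using card_mono[of "{2..q}" B] by (simp add: B)
  then consider "p + 1 \<le> j" "j \<le> p + card B" | "p + card B + 1 \<le> j" "j \<le> p + q"
    | "\<not> (p + 1 \<le> j \<and> j \<le> p + q)"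
    by linarith
  then show "sigma_tilde \<alpha> \<beta> p q (card B) j = shuffle_perm p q B j"
  proof cases
    case 1
    then have "card B + 1 - (j - p) \<in> {1..card B}" "j - p - 1 < card B"
      "card B + 1 - (j - p) - 1 = card B - Suc (j - p - 1)"
      by auto
    then show ?thesis
      using 1 \<open>card B \<le> q\<close> \<beta> shuffle_word_nth_prefix[OF fin, of "j - p - 1" q]
      by (simp add: sigma_tilde_def shuffle_perm_def)
  next
    case 2
    then have "j - p - card B \<in> {1..q - card B}" "card B \<le> j - p - 1"
      by auto
    then show ?thesis
      using 2 \<alpha> shuffle_word_nth_suffix[OF fin, of "j - p - 1" q]
      by (simp add: sigma_tilde_def shuffle_perm_def)
  next
    case 3
    then show ?thesis
      using \<open>card B \<le> q\<close> by (auto simp: sigma_tilde_def shuffle_perm_def)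
  qed
qed

lemma sorted_list_of_set_image_strict_mono_on:
  assumes "strict_mono_on {1..t} (f :: nat \<Rightarrow> nat)"
  shows "sorted_list_of_set (f ` {1..t}) = map f [1..<t+1]"
proof -
  have "sorted_wrt (<) (map f [1..<t+1])"
    unfolding sorted_wrt_iff_nth_less
    by (auto simp del: upt_Suc intro!: strict_mono_onD[OF assms])
  moreover have "card (f ` {1..t}) = t"
    using card_image[OF strict_mono_on_imp_inj_on[OF assms]] by simp
  ultimately show ?thesis
    by (subst sorted_list_of_set_unique[symmetric]) auto
qed

lemma strict_mono_on_eq_sorted_list_of_set_nth:
  assumes "strict_mono_on {1..t} (f :: nat \<Rightarrow> nat)" "j \<in> {1..t}"
  shows "f j = sorted_list_of_set (f ` {1..t}) ! (j - 1)"
proof -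
  have j: "j - 1 < t" "1 + (j - 1) = j"
    using assms(2) by auto
  have "map f [1..<t+1] ! (j - 1) = f ([1..<t+1] ! (j - 1))"
    using j by (intro nth_map) simp
  also have "[1..<t+1] ! (j - 1) = j"
    using j by (subst nth_upt) simp_all
  finally show ?thesis
    unfolding sorted_list_of_set_image_strict_mono_on[OF assms(1)] ..
qed

lemma strict_mono_on_sorted_list_of_set_nth:
  assumes "finite A"
  shows "strict_mono_on {1..card A} (\<lambda>j. sorted_list_of_set A ! (j - 1))"
proof (rule strict_mono_onI)
  fix r s
  assume "r \<in> {1..card A}" "s \<in> {1..card A}" "r < s"
  then show "sorted_list_of_set A ! (r - 1) < sorted_list_of_set A ! (s - 1)"
    using sorted_wrt_nth_less[OF strict_sorted_list_of_set[of A], of "r - 1" "s - 1"] assms by auto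
qed

lemma sorted_list_of_set_nth_mem:
  assumes "finite A" "j \<in> {1..card A}"
  shows "sorted_list_of_set A ! (j - 1) \<in> A"
proof -
  have "j - 1 < length (sorted_list_of_set A)"
    using assms by auto
  then have "sorted_list_of_set A ! (j - 1) \<in> set (sorted_list_of_set A)"
    by (rule nth_mem)
  then show ?thesis
    using assms(1) by simp
qed

lemma shuffle1_image_partition:
  assumes sh: "(\<alpha>, \<beta>) \<in> shuffle1 s t" and s: "1 \<le> s"
  shows "\<beta> ` {1..t} \<subseteq> {2..s+t}" and "card (\<beta> ` {1..t}) = t"
    and "{1..s+t} - \<beta> ` {1..t} = \<alpha> ` {1..s}"
proof -
  have \<alpha>_mono: "strict_mono_on {1..s} \<alpha>" and \<beta>_mono: "strict_mono_on {1..t} \<beta>"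
    and \<alpha>_range: "\<alpha> ` {1..s} \<subseteq> {1..s+t}" and \<beta>_range: "\<beta> ` {1..t} \<subseteq> {1..s+t}"
    and disj: "\<alpha> ` {1..s} \<inter> \<beta> ` {1..t} = {}" and \<alpha>1: "\<alpha> 1 = 1"
    using sh unfolding shuffle1_def by auto
  show card_\<beta>: "card (\<beta> ` {1..t}) = t"
    using card_image[OF strict_mono_on_imp_inj_on[OF \<beta>_mono]] by simp
  have card_\<alpha>: "card (\<alpha> ` {1..s}) = s"
    using card_image[OF strict_mono_on_imp_inj_on[OF \<alpha>_mono]] by simp
  have "1 \<in> \<alpha> ` {1..s}"
    using s \<alpha>1 by (metis atLeastAtMost_iff image_eqI order_refl)
  then show "\<beta> ` {1..t} \<subseteq> {2..s+t}"
    using \<beta>_range disj by (fastforce simp: not_less_eq_eq)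
  have "card (\<alpha> ` {1..s} \<union> \<beta> ` {1..t}) = card {1..s+t}"
    using card_Un_disjoint[OF _ _ disj] card_\<alpha> card_\<beta> by simp
  then have "\<alpha> ` {1..s} \<union> \<beta> ` {1..t} = {1..s+t}"
    using \<alpha>_range \<beta>_range by (intro card_subset_eq) auto
  then show "{1..s+t} - \<beta> ` {1..t} = \<alpha> ` {1..s}"
    using disj by blast
qed

lemma sigma_perm_eq_C_perm:
  assumes sh: "(\<alpha>, \<beta>) \<in> shuffle1 (q - i) i" and i: "i < q"
  shows "sigma_perm \<alpha> \<beta> p q i = C_perm p q (\<beta> ` {1..i})"
proof -
  let ?B = "\<beta> ` {1..i}"
  have qi: "q - i + i = q"
    using i by simp
  have part: "?B \<subseteq> {2..q}" "card ?B = i" "{1..q} - ?B = \<alpha> ` {1..q - i}"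
    using shuffle1_image_partition[OF sh] i qi by auto
  have \<alpha>_mono: "strict_mono_on {1..q - i} \<alpha>" and \<beta>_mono: "strict_mono_on {1..i} \<beta>"
    using sh unfolding shuffle1_def by auto
  have "sigma_tilde \<alpha> \<beta> p q (card ?B) = shuffle_perm p q ?B"
  proof (rule sigma_tilde_eq_shuffle_perm)
    show "?B \<subseteq> {2..q}"
      by (rule part(1))
  next
    fix j
    assume "j \<in> {1..card ?B}"
    then show "\<beta> j = sorted_list_of_set ?B ! (j - 1)"
      using part(2) by (intro strict_mono_on_eq_sorted_list_of_set_nth[OF \<beta>_mono]) simp
  next
    fix j
    assume "j \<in> {1..q - card ?B}"
    then show "\<alpha> j = sorted_list_of_set ({1..q} - ?B) ! (j - 1)"
      unfolding part(3) using part(2) by (intro strict_mono_on_eq_sorted_list_of_set_nth[OF \<alpha>_mono]) simp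
  qed
  then show ?thesis
    using part(2) by (simp add: sigma_perm_def C_perm_def)
qed

lemma C_perm_in_C_set:
  assumes B: "B \<subseteq> {2..q}" and q: "1 \<le> q"
  shows "C_perm p q B \<in> C_set p q"
proof -
  define i where "i = card B"
  define \<alpha> where "\<alpha> = (\<lambda>j. sorted_list_of_set ({1..q} - B) ! (j - 1))"
  define \<beta> where "\<beta> = (\<lambda>j. sorted_list_of_set B ! (j - 1))"
  have fin: "finite B"
    using rev_finite_subset[OF finite_atLeastAtMost B] .
  have i: "i \<le> q - 1"
    using card_mono[of "{2..q}" B] B by (simp add: i_def)
  have card_compl: "card ({1..q} - B) = q - i"
    using B by (subst card_Diff_subset) (auto simp: fin i_def)
  have \<alpha>_range: "\<alpha> j \<in> {1..q} - B" if "j \<in> {1..q - i}" for j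
    using sorted_list_of_set_nth_mem[of "{1..q} - B" j] card_compl that by (simp add: \<alpha>_def)
  have \<beta>_range: "\<beta> j \<in> B" if "j \<in> {1..i}" for j
    using sorted_list_of_set_nth_mem[OF fin, of j] that by (simp add: \<beta>_def i_def)
  have "strict_mono_on {1..q - i} \<alpha>"
    using strict_mono_on_sorted_list_of_set_nth[of "{1..q} - B"] card_compl by (simp add: \<alpha>_def)
  moreover have "strict_mono_on {1..i} \<beta>"
    using strict_mono_on_sorted_list_of_set_nth[OF fin] by (simp add: \<beta>_def i_def)
  moreover have "\<alpha> ` {1..q - i} \<subseteq> {1..q}" "\<beta> ` {1..i} \<subseteq> {1..q}"
    using \<alpha>_range \<beta>_range B by fastforce+
  moreover have "\<alpha> ` {1..q - i} \<inter> \<beta> ` {1..i} = {}"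
    unfolding disjoint_iff by (metis DiffD2 imageE \<alpha>_range \<beta>_range)
  moreover have "\<alpha> 1 = 1"
    using sorted_list_of_set_diff_eq_Cons_1[OF B q] by (simp add: \<alpha>_def)
  moreover have "q - i + i = q"
    using i q by simp
  ultimately have sh: "(\<alpha>, \<beta>) \<in> shuffle1 (q - i) i"
    unfolding shuffle1_def by simp
  have "sigma_tilde \<alpha> \<beta> p q i = shuffle_perm p q B"
    unfolding i_def by (rule sigma_tilde_eq_shuffle_perm[OF B]) (auto simp: \<alpha>_def \<beta>_def)
  then have "C_perm p q B = sigma_perm \<alpha> \<beta> p q i"
    by (simp add: sigma_perm_def C_perm_def i_def)
  then show ?thesis
    using i sh unfolding C_set_def by blast
qed

lemma C_set_eq_image: "1 \<le> q \<Longrightarrow> C_set p q = C_perm p q ` Pow {2..q}"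
proof
  assume q: "1 \<le> q"
  show "C_set p q \<subseteq> C_perm p q ` Pow {2..q}"
  proof
    fix \<sigma>
    assume "\<sigma> \<in> C_set p q"
    then obtain i \<alpha> \<beta> where \<sigma>: "\<sigma> = sigma_perm \<alpha> \<beta> p q i" and i: "i < q"
      and sh: "(\<alpha>, \<beta>) \<in> shuffle1 (q - i) i"
      using q unfolding C_set_def by fastforce
    have "\<beta> ` {1..i} \<subseteq> {2..q}"
      using shuffle1_image_partition(1)[OF sh] i by simp
    then show "\<sigma> \<in> C_perm p q ` Pow {2..q}"
      using sigma_perm_eq_C_perm[OF sh i] \<sigma> by blast
  qed
  show "C_perm p q ` Pow {2..q} \<subseteq> C_set p q"
    using C_perm_in_C_set q by blast
qed

lemma shuffle_perm_image_block:
  assumes B: "B \<subseteq> {2..q}"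
  shows "shuffle_perm p q B ` {p+1..p+q} = {p+1..p+q}"
proof (intro equalityI subsetI)
  fix x
  assume "x \<in> shuffle_perm p q B ` {p+1..p+q}"
  then obtain j where j: "j \<in> {p+1..p+q}" and x: "x = p + shuffle_word B q ! (j - p - 1)"
    using shuffle_perm_block by auto
  then have "shuffle_word B q ! (j - p - 1) \<in> {1..q}"
    using shuffle_word_nth_range[OF B] by auto
  then show "x \<in> {p+1..p+q}"
    using x by auto
next
  fix x
  assume x: "x \<in> {p+1..p+q}"
  then have "x - p \<in> set (shuffle_word B q)"
    using set_shuffle_word[OF B] by auto
  then obtain m where m: "m < q" "shuffle_word B q ! m = x - p"
    by (auto simp: in_set_conv_nth shuffle_word_length[OF B])
  then have "shuffle_perm p q B (p + 1 + m) = x"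
    using x shuffle_perm_block[of p "p + 1 + m" q B] by simp
  then show "x \<in> shuffle_perm p q B ` {p+1..p+q}"
    using m(1) by force
qed

lemma shuffle_perm_permutes:
  assumes "B \<subseteq> {2..q}"
  shows "shuffle_perm p q B permutes {1..p+q}"
proof (rule bij_imp_permutes)
  have "{1..p+q} = {1..p} \<union> {p+1..p+q}"
    by auto
  moreover have "shuffle_perm p q B ` {1..p} = {1..p}"
    by (auto simp: shuffle_perm_def)
  ultimately have "shuffle_perm p q B ` {1..p+q} = {1..p+q}"
    using shuffle_perm_image_block[OF assms] by (simp add: image_Un)
  then show "bij_betw (shuffle_perm p q B) {1..p+q} {1..p+q}"
    unfolding bij_betw_def by (simp add: eq_card_imp_inj_on)
  show "shuffle_perm p q B x = x" if "x \<notin> {1..p+q}" for x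
    using that by (auto simp: shuffle_perm_def)
qed

lemma C_perm_permutes:
  assumes "1 \<le> p" "1 \<le> q" "B \<subseteq> {2..q}"
  shows "C_perm p q B permutes {1..p+q}"
proof -
  have "transpose (1::nat) 2 permutes {1..p+q}"
    using assms by (intro permutes_swap_id) auto
  then have "(transpose (1::nat) 2 ^^ card B) permutes {1..p+q}"
    unfolding transpose_funpow using permutes_id by simp
  then show ?thesis
    unfolding C_perm_def using shuffle_perm_permutes[OF assms(3)] permutes_compose by blast
qed

lemma C_set_permutes: "1 \<le> p \<Longrightarrow> 1 \<le> q \<Longrightarrow> \<sigma> \<in> C_set p q \<Longrightarrow> \<sigma> permutes {1..p+q}"
  using C_set_eq_image C_perm_permutes by fastforce

lemma shuffle_perm_2_neq_1:
  assumes "1 \<le> p" "B \<subseteq> {2..q}"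
  shows "shuffle_perm p q B 2 \<noteq> 1"
  using assms shuffle_word_nth_range[OF assms(2), of "1 - p"] by (auto simp: shuffle_perm_def)

lemma C_perm_1_eq_1_iff:
  assumes "1 \<le> p" "B \<subseteq> {2..q}"
  shows "C_perm p q B 1 = 1 \<longleftrightarrow> even (card B)"
  using assms shuffle_perm_2_neq_1[OF assms] by (auto simp: C_perm_apply shuffle_perm_def)

lemma C_perm_inj_on:
  assumes p: "1 \<le> p" and q: "1 \<le> q"
  shows "inj_on (C_perm p q) (Pow {2..q})"
proof (rule inj_onI)
  fix B B'
  assume "B \<in> Pow {2..q}" "B' \<in> Pow {2..q}" and eq: "C_perm p q B = C_perm p q B'"
  then have B: "B \<subseteq> {2..q}" and B': "B' \<subseteq> {2..q}"
    by auto
  have "even (card B) \<longleftrightarrow> even (card B')"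
    using C_perm_1_eq_1_iff[OF p B] C_perm_1_eq_1_iff[OF p B'] eq by simp
  then have "transpose (1::nat) 2 ^^ card B = transpose 1 2 ^^ card B'"
    by (simp only: transpose_funpow)
  moreover have "shuffle_perm p q C = C_perm p q C \<circ> (transpose 1 2 ^^ card C)" for C
    unfolding C_perm_def comp_assoc transpose_funpow by simp
  ultimately have perm_eq: "shuffle_perm p q B = shuffle_perm p q B'"
    using eq by metis
  have "shuffle_word B q = shuffle_word B' q"
  proof (rule nth_equalityI)
    show "length (shuffle_word B q) = length (shuffle_word B' q)"
      using shuffle_word_length B B' by simp
    fix m
    assume "m < length (shuffle_word B q)"
    then have "m < q"
      using shuffle_word_length[OF B] by simp
    then show "shuffle_word B q ! m = shuffle_word B' q ! m"
      using perm_eq shuffle_perm_block[of p "p + 1 + m" q B] shuffle_perm_block[of p "p + 1 + m" q B']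
      by simp
  qed
  then show "B = B'"
    using shuffle_word_inj[OF B B' q] by blast
qed

lemma perm_bracket_shuffle_perm:
  assumes p: "1 \<le> p" and B: "B \<subseteq> {2..q}" and n: "p + q \<le> n"
  shows "perm_bracket br n a (shuffle_perm p q B) =
    foldl br (foldl br (left_normed br (map a [1..<p+1])) (map (\<lambda>i. a (p + i)) (shuffle_word B q)))
      (map a [p+q+1..<n+1])"
proof -
  have upt: "[1..<n+1] = [1..<p+1] @ [p+1..<p+q+1] @ [p+q+1..<n+1]"
    using n by (simp only: upt_append)
  have head: "map (\<lambda>j. a (shuffle_perm p q B j)) [1..<p+1] = map a [1..<p+1]"
    by (intro map_cong) (auto simp: shuffle_perm_def simp del: upt_Suc)
  have block: "map (\<lambda>j. a (shuffle_perm p q B j)) [p+1..<p+q+1] = map (\<lambda>i. a (p + i)) (shuffle_word B q)"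
    by (rule map_upt_eqI) (simp_all add: shuffle_word_length[OF B] shuffle_perm_block)
  have tail: "map (\<lambda>j. a (shuffle_perm p q B j)) [p+q+1..<n+1] = map a [p+q+1..<n+1]"
    by (intro map_cong) (auto simp: shuffle_perm_def simp del: upt_Suc)
  have "map a [1..<p+1] \<noteq> []"
    using p by simp
  then show ?thesis
    unfolding perm_bracket_def upt map_append head block tail
    by (simp only: left_normed_append[OF \<open>map a [1..<p+1] \<noteq> []\<close>] foldl_append)
qed

section \<open>The sets \<open>T\<^sub>k\<^sub>,\<^sub>l\<close>\<close>

lemma Phi_inj: "inj (Phi k l)"
  by (rule injI) (auto simp: Phi_def split: if_splits)

lemma Phi_permutes: "Phi k l permutes {1..k+l}"
proof (rule bij_imp_permutes)
  have "Phi k l ` {1..k+l} \<subseteq> {1..k+l}"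
    by (auto simp: Phi_def)
  then show "bij_betw (Phi k l) {1..k+l} {1..k+l}"
    using Phi_inj endo_inj_surj[of "{1..k+l}" "Phi k l"] inj_on_subset
    by (metis bij_betw_def finite_atLeastAtMost subset_UNIV)
  show "Phi k l x = x" if "x \<notin> {1..k+l}" for x
    using that by (auto simp: Phi_def)
qed

lemma Phi_eq_1: "1 \<le> k \<Longrightarrow> Phi k l y = 1 \<Longrightarrow> y = l + 1"
  by (auto simp: Phi_def split: if_splits)

lemma C_perm_1_or_2_eq_1:
  assumes "1 \<le> p" "B \<subseteq> {2..q}"
  shows "C_perm p q B 1 = 1 \<or> C_perm p q B 2 = 1 \<and> 2 \<le> q"
proof (cases "even (card B)")
  case True
  then show ?thesis
    using C_perm_1_eq_1_iff[OF assms] by simp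
next
  case False
  then obtain x where "x \<in> B"
    by fastforce
  then show ?thesis
    using False assms by (auto simp: C_perm_apply shuffle_perm_def)
qed

lemma C_perm_1_neq:
  assumes "1 \<le> p" "B \<subseteq> {2..q}"
  shows "C_perm p q B 1 \<noteq> p + 1"
proof (cases "even (card B) \<or> 2 \<le> p")
  case True
  then show ?thesis
    using assms by (auto simp: C_perm_apply shuffle_perm_def)
next
  case False
  then have "p = 1" "B \<noteq> {}"
    using assms(1) by auto
  then show ?thesis
    using False shuffle_word_nth_0_mem[OF assms(2)] assms(2)
    by (fastforce simp: C_perm_apply shuffle_perm_def)
qed

lemma C_perm_2_neq: "2 \<le> p \<Longrightarrow> C_perm p q B 2 \<noteq> p + 1"
  by (simp add: C_perm_apply shuffle_perm_def)

text \<open>Every \<open>\<sigma> \<in> C\<^sub>k\<^sub>,\<^sub>l\<close> has \<open>\<sigma>(1) = 1\<close> or \<open>\<sigma>(2) = 1\<close>, whereas \<open>(\<Phi> \<circ> \<tau>)(j) = 1\<close> forces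
  \<open>\<tau>(j) = l + 1\<close>, which no \<open>\<tau> \<in> C\<^sub>l\<^sub>,\<^sub>k\<close> does at \<open>j = 1, 2\<close>.\<close>
lemma C_set_disjoint_Phi_image:
  assumes k: "1 \<le> k" and l: "1 \<le> l"
  shows "C_set k l \<inter> (\<lambda>\<tau>. Phi k l \<circ> \<tau>) ` C_set l k = {}"
proof (rule ccontr)
  assume "C_set k l \<inter> (\<lambda>\<tau>. Phi k l \<circ> \<tau>) ` C_set l k \<noteq> {}"
  then obtain B B' where B: "B \<subseteq> {2..l}" and B': "B' \<subseteq> {2..k}"
    and eq: "C_perm k l B = Phi k l \<circ> C_perm l k B'"
    unfolding C_set_eq_image[OF k] C_set_eq_image[OF l] by auto
  from C_perm_1_or_2_eq_1[OF k B] show False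
  proof
    assume "C_perm k l B 1 = 1"
    then show False
      using eq Phi_eq_1[OF k] C_perm_1_neq[OF l B'] by (metis comp_apply)
  next
    assume "C_perm k l B 2 = 1 \<and> 2 \<le> l"
    then show False
      using eq Phi_eq_1[OF k] C_perm_2_neq[of l k B'] by (metis comp_apply)
  qed
qed

lemma T_set_eq: "T_set k l = C_set k l \<union> (\<lambda>\<tau>. Phi k l \<circ> \<tau>) ` C_set l k"
  unfolding T_set_def by blast

lemma T_set_permutes:
  assumes "1 \<le> k" "1 \<le> l" "\<sigma> \<in> T_set k l"
  shows "\<sigma> permutes {1..k+l}"
  using assms C_set_permutes[of k l] C_set_permutes[of l k] Phi_permutes[of k l]
  unfolding T_set_eq by (auto simp: add.commute intro: permutes_compose)

lemma T_set_n_eq_T_set: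
  assumes "1 \<le> k" "1 \<le> l"
  shows "T_set_n k l n = T_set k l"
proof -
  have "iota (k + l) n \<sigma> = \<sigma>" if "\<sigma> \<in> T_set k l" for \<sigma>
    using T_set_permutes[OF assms that] by (auto simp: fun_eq_iff iota_def permutes_not_in)
  then show ?thesis
    unfolding T_set_n_def by simp
qed

section \<open>Brackets in a Lie ring\<close>

context
  fixes br :: "'a::ab_group_add \<Rightarrow> 'a \<Rightarrow> 'a"
  assumes lie: "lie_ring br"
begin

lemma bracket_add_left: "br (x + y) z = br x z + br y z"
  using lie by (simp add: lie_ring_def)

lemma bracket_add_right: "br x (y + z) = br x y + br x z"
  using lie by (simp add: lie_ring_def)

lemma bracket_self: "br x x = 0"
  using lie by (simp add: lie_ring_def)

lemma bracket_zero_left: "br 0 z = 0"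
  using bracket_add_left[of 0 0 z] by simp

lemma bracket_minus_left: "br (- x) z = - br x z"
  using bracket_add_left[of x "- x" z] by (simp add: bracket_zero_left eq_neg_iff_add_eq_0 add.commute)

lemma bracket_anticomm: "br y x = - br x y"
proof -
  have "br (x + y) (x + y) = br x y + br y x"
    by (simp add: bracket_add_left bracket_add_right bracket_self[of x] bracket_self[of y])
  then have "br x y + br y x = 0"
    by (metis bracket_self)
  then show ?thesis
    by (metis add.commute eq_neg_iff_add_eq_0)
qed

lemma bracket_leibniz: "br x (br y z) = br (br x y) z - br (br x z) y"
proof -
  have "br (br x y) z + br (br y z) x + br (br z x) y = 0"
    using lie by (simp add: lie_ring_def)
  moreover have "br (br y z) x = - br x (br y z)"
    by (rule bracket_anticomm)
  moreover have "br (br z x) y = - br (br x z) y"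
    using bracket_anticomm[of z x] bracket_minus_left by simp
  ultimately show ?thesis
    by (simp add: algebra_simps eq_neg_iff_add_eq_0)
qed

lemma foldl_bracket_add: "foldl br (x + y) zs = foldl br x zs + foldl br y zs"
  by (induction zs arbitrary: x y) (simp_all add: bracket_add_left)

lemma foldl_bracket_zero: "foldl br 0 zs = 0"
  by (induction zs) (simp_all add: bracket_zero_left)

lemma foldl_bracket_minus: "foldl br (- x) zs = - foldl br x zs"
  by (induction zs arbitrary: x) (simp_all add: bracket_minus_left)

lemma foldl_bracket_card_sign: "foldl br (card_sign B x) zs = card_sign B (foldl br x zs)"
  by (simp add: card_sign_def foldl_bracket_minus)

lemma foldl_bracket_sum: "foldl br (\<Sum>i\<in>A. f i) zs = (\<Sum>i\<in>A. foldl br (f i) zs)"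
  using sum_comp_morphism[of "\<lambda>x. foldl br x zs" f A]
  by (simp add: foldl_bracket_add foldl_bracket_zero o_def)

lemma bracket_card_sign_left: "br (card_sign B x) y = card_sign B (br x y)"
  using foldl_bracket_card_sign[of B x "[y]"] by simp

lemma bracket_sum_left: "br (\<Sum>i\<in>A. f i) y = (\<Sum>i\<in>A. br (f i) y)"
  using foldl_bracket_sum[of f A "[y]"] by simp

text \<open>By \<open>[x, [y, c]] = [[x, y], c] - [[x, c], y]\<close>, each letter \<open>b\<^sub>j\<close> with \<open>j \<ge> 2\<close> is either
  appended at the end or, with a sign, put in front of all earlier letters; \<open>B\<close> records the
  letters put in front.\<close>
lemma bracket_left_normed_expansion:
  assumes "1 \<le> q"
  shows "br x (left_normed br (map b [1..<q+1])) =
    (\<Sum>B\<in>Pow {2..q}. card_sign B (foldl br x (map b (shuffle_word B q))))"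
  using assms
proof (induction q arbitrary: x rule: dec_induct)
  case base
  have "shuffle_word {} 1 = [1]"
    by (simp add: shuffle_word_def)
  then show ?case
    by (simp add: card_sign_def)
next
  case (step q)
  define y where "y = left_normed br (map b [1..<q+1])"
  define c where "c = b (Suc q)"
  let ?S = "\<lambda>x. \<Sum>B\<in>Pow {2..q}. card_sign B (foldl br x (map b (shuffle_word B q)))"
  have snoc: "map b [1..<Suc q + 1] = map b [1..<q+1] @ [c]"
    by (simp add: c_def)
  have "map b [1..<q+1] \<noteq> []"
    using step.hyps by simp
  then have y_Suc: "left_normed br (map b [1..<Suc q + 1]) = br y c"
    unfolding y_def snoc by (rule left_normed_snoc)
  have disj: "Pow {2..q} \<inter> insert (Suc q) ` Pow {2..q} = {}"
    by auto
  have inj: "inj_on (insert (Suc q)) (Pow {2..q})"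
    by (rule inj_onI) (metis PowD atLeastAtMost_iff insert_ident not_less_eq_eq order_refl subset_iff)
  have card_insert: "card (insert (Suc q) B) = Suc (card B)" if "B \<in> Pow {2..q}" for B
    using that by (subst card_insert_disjoint) (auto intro: finite_subset)
  have stay: "(\<Sum>B\<in>Pow {2..q}. card_sign B (foldl br x (map b (shuffle_word B (Suc q))))) = br (?S x) c"
  proof -
    have "(\<Sum>B\<in>Pow {2..q}. card_sign B (foldl br x (map b (shuffle_word B (Suc q))))) =
        (\<Sum>B\<in>Pow {2..q}. br (card_sign B (foldl br x (map b (shuffle_word B q)))) c)"
      by (intro sum.cong) (simp_all add: shuffle_word_Suc c_def bracket_card_sign_left)
    then show ?thesis
      by (simp add: bracket_sum_left)
  qed
  have jump: "(\<Sum>B\<in>Pow {2..q}. card_sign (insert (Suc q) B)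
      (foldl br x (map b (shuffle_word (insert (Suc q) B) (Suc q))))) = - ?S (br x c)"
  proof -
    have "(\<Sum>B\<in>Pow {2..q}. card_sign (insert (Suc q) B)
        (foldl br x (map b (shuffle_word (insert (Suc q) B) (Suc q))))) =
        (\<Sum>B\<in>Pow {2..q}. - card_sign B (foldl br (br x c) (map b (shuffle_word B q))))"
      by (intro sum.cong) (simp_all add: shuffle_word_insert_Suc card_insert card_sign_def c_def)
    then show ?thesis
      by (simp add: sum_negf)
  qed
  let ?F = "\<lambda>B. card_sign B (foldl br x (map b (shuffle_word B (Suc q))))"
  have "(\<Sum>B\<in>Pow {2..Suc q}. ?F B) = (\<Sum>B\<in>Pow {2..q}. ?F B) + (\<Sum>B\<in>insert (Suc q) ` Pow {2..q}. ?F B)"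
    unfolding Pow_atLeastAtMost_Suc[OF step.hyps(1)] by (rule sum.union_disjoint) (use disj in auto)
  also have "(\<Sum>B\<in>insert (Suc q) ` Pow {2..q}. ?F B) = (\<Sum>B\<in>Pow {2..q}. ?F (insert (Suc q) B))"
    by (rule sum.reindex[OF inj, unfolded o_def])
  also have "(\<Sum>B\<in>Pow {2..q}. ?F B) + (\<Sum>B\<in>Pow {2..q}. ?F (insert (Suc q) B)) = br (?S x) c - ?S (br x c)"
    using stay jump by simp
  also have "\<dots> = br x (br y c)"
    using step.IH[of x] step.IH[of "br x c"] by (simp add: y_def bracket_leibniz)
  finally show ?case
    unfolding y_Suc by (rule sym)
qed

lemma perm_bracket_comp_transpose:
  assumes "2 \<le> n"
  shows "perm_bracket br n a (\<sigma> \<circ> transpose 1 2) = - perm_bracket br n a \<sigma>"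
proof -
  have upt: "[1..<n+1] = 1 # 2 # [3..<n+1]"
    using assms by (simp add: upt_conv_Cons del: upt_Suc) (simp add: numeral_3_eq_3)
  have tail: "map (\<lambda>j. a ((\<sigma> \<circ> transpose 1 2) j)) [3..<n+1] = map (\<lambda>j. a (\<sigma> j)) [3..<n+1]"
    by (intro map_cong) (auto simp: transpose_apply_other simp del: upt_Suc)
  show ?thesis
    unfolding perm_bracket_def upt list.map left_normed.simps foldl_Cons tail
    by (simp add: bracket_anticomm[of "a (\<sigma> 2)"] foldl_bracket_minus)
qed

lemma perm_bracket_C_perm:
  assumes "1 \<le> p" "1 \<le> q" "p + q \<le> n"
  shows "perm_bracket br n a (C_perm p q B) = card_sign B (perm_bracket br n a (shuffle_perm p q B))"
  unfolding C_perm_def transpose_funpow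
  using assms perm_bracket_comp_transpose[of n a "shuffle_perm p q B"] by (simp add: card_sign_def)

lemma sum_C_set_perm_bracket:
  assumes p: "1 \<le> p" and q: "1 \<le> q" and n: "p + q \<le> n"
  shows "(\<Sum>\<sigma>\<in>C_set p q. perm_bracket br n a \<sigma>) =
    foldl br (br (left_normed br (map a [1..<p+1])) (left_normed br (map a [p+1..<p+q+1])))
      (map a [p+q+1..<n+1])"
proof -
  define x where "x = left_normed br (map a [1..<p+1])"
  define R where "R = map a [p+q+1..<n+1]"
  define b where "b = (\<lambda>i. a (p + i))"
  have "(\<Sum>\<sigma>\<in>C_set p q. perm_bracket br n a \<sigma>) = (\<Sum>B\<in>Pow {2..q}. perm_bracket br n a (C_perm p q B))"
    unfolding C_set_eq_image[OF q] by (rule sum.reindex[OF C_perm_inj_on[OF p q], unfolded o_def])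
  also have "\<dots> = (\<Sum>B\<in>Pow {2..q}. foldl br (card_sign B (foldl br x (map b (shuffle_word B q)))) R)"
    using p q n by (intro sum.cong)
      (simp_all add: perm_bracket_C_perm perm_bracket_shuffle_perm foldl_bracket_card_sign x_def R_def b_def)
  also have "\<dots> = foldl br (br x (left_normed br (map b [1..<q+1]))) R"
    by (simp only: foldl_bracket_sum[symmetric] bracket_left_normed_expansion[OF q])
  also have "map b [1..<q+1] = map a [p+1..<p+q+1]"
    using map_upt_shift[of 1 "q + 1" a p b] by (simp add: b_def ac_simps)
  finally show ?thesis
    by (simp add: x_def R_def)
qed

lemma sum_Phi_image_perm_bracket:
  assumes k: "1 \<le> k" and l: "1 \<le> l" and n: "k + l \<le> n"
  shows "(\<Sum>\<sigma>\<in>(\<lambda>\<tau>. Phi k l \<circ> \<tau>) ` C_set l k. perm_bracket br n a \<sigma>) =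
    foldl br (br (left_normed br (map a [k+1..<k+l+1])) (left_normed br (map a [1..<k+1])))
      (map a [k+l+1..<n+1])"
proof -
  have "inj_on (\<lambda>\<tau>. Phi k l \<circ> \<tau>) (C_set l k)"
    by (rule inj_onI) (auto simp: fun_eq_iff inj_eq[OF Phi_inj])
  then have "(\<Sum>\<sigma>\<in>(\<lambda>\<tau>. Phi k l \<circ> \<tau>) ` C_set l k. perm_bracket br n a \<sigma>) =
      (\<Sum>\<tau>\<in>C_set l k. perm_bracket br n (a \<circ> Phi k l) \<tau>)"
    by (simp add: sum.reindex perm_bracket_def)
  also have "\<dots> = foldl br (br (left_normed br (map (a \<circ> Phi k l) [1..<l+1]))
      (left_normed br (map (a \<circ> Phi k l) [l+1..<l+k+1]))) (map (a \<circ> Phi k l) [l+k+1..<n+1])"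
    using sum_C_set_perm_bracket[OF l k] n by (simp add: add.commute)
  also have "map (a \<circ> Phi k l) [1..<l+1] = map a [k+1..<k+l+1]"
    using map_upt_shift[of 1 "l + 1" a k "a \<circ> Phi k l"] by (simp add: Phi_def ac_simps)
  also have "map (a \<circ> Phi k l) [l+1..<l+k+1] = map a [1..<k+1]"
    using map_upt_shift[of 1 "k + 1" "a \<circ> Phi k l" l a] by (simp add: Phi_def ac_simps)
  also have "map (a \<circ> Phi k l) [l+k+1..<n+1] = map a [k+l+1..<n+1]"
    by (intro map_cong) (auto simp: Phi_def add.commute simp del: upt_Suc)
  finally show ?thesis .
qed

lemma sum_T_set_perm_bracket:
  assumes "1 \<le> k" "1 \<le> l" "k + l \<le> n"
  shows "(\<Sum>\<sigma>\<in>T_set k l. perm_bracket br n a \<sigma>) = 0"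
proof -
  let ?x = "left_normed br (map a [1..<k+1])" and ?y = "left_normed br (map a [k+1..<k+l+1])"
    and ?R = "map a [k+l+1..<n+1]"
  have "(\<Sum>\<sigma>\<in>T_set k l. perm_bracket br n a \<sigma>) =
      (\<Sum>\<sigma>\<in>C_set k l. perm_bracket br n a \<sigma>) +
      (\<Sum>\<sigma>\<in>(\<lambda>\<tau>. Phi k l \<circ> \<tau>) ` C_set l k. perm_bracket br n a \<sigma>)"
    unfolding T_set_eq using assms C_set_disjoint_Phi_image
    by (intro sum.union_disjoint) (simp_all add: C_set_eq_image)
  also have "\<dots> = foldl br (br ?x ?y + br ?y ?x) ?R"
    using assms by (simp add: sum_C_set_perm_bracket sum_Phi_image_perm_bracket foldl_bracket_add)
  also have "br ?y ?x = - br ?x ?y"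
    by (rule bracket_anticomm)
  finally show ?thesis
    by (simp add: foldl_bracket_zero)
qed

end

theorem theorem1:
  fixes br :: "'a::ab_group_add \<Rightarrow> 'a \<Rightarrow> 'a" and k l n :: nat
  assumes "lie_ring br" and "1 \<le> k" and "1 \<le> l" and "k + l \<le> n"
  shows "T_set_n k l n \<subseteq> {\<sigma>. \<sigma> permutes {1..n}} \<and> jacobi_in br n (T_set_n k l n)"
proof -
  have "T_set_n k l n = T_set k l"
    using assms by (simp add: T_set_n_eq_T_set)
  moreover have "\<sigma> permutes {1..n}" if "\<sigma> \<in> T_set k l" for \<sigma>
    by (rule permutes_subset[OF T_set_permutes[OF assms(2,3) that]]) (use assms(4) in auto)
  ultimately show ?thesis
    using sum_T_set_perm_bracket[OF assms] by (auto simp: jacobi_in_def)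
qed

end
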